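(* Let $\mathbb{F}$ be a finite field, $G\subseteq\mathbb{F}$, $m,k\in\mathbb{N}$, and $d,d'\in\mathbb{N}$ with $d'\ge 2(|G|-1)$. Suppose $S\subseteq\mathbb{F}^{m+k}$ is such that there exist coefficients $(c_{\vec\alpha})_{\vec\alpha\in\mathbb{F}^m}$ and $(d_{\vec q})_{\vec q\in S}$ in $\mathbb{F}$ with (i) for all $Z\in\mathbb{F}^{\le d,\le d'}[X_1,\dots,X_m,Y_1,\dots,Y_k]$: $\sum_{\vec\alpha\in\mathbb{F}^m}c_{\vec\alpha}\sum_{\vec y\in G^k}Z(\vec\alpha,\vec y)=\sum_{\vec q\in S}d_{\vec q}Z(\vec q)$, and (ii) there exists $Z'\in\mathbb{F}^{\le d,\le d'}[X_1,\dots,X_m,Y_1,\dots,Y_k]$ with $\sum_{\vec\alpha\in\mathbb{F}^m}c_{\vec\alpha}\sum_{\vec y\in G^k}Z'(\vec\alpha,\vec y)\ne 0$. Then $|S|\ge|G|^k$.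
   Context: $\mathbb{F}^{\le d,\le d'}[X_1,\dots,X_m,Y_1,\dots,Y_k]$ denotes the set of $(m+k)$-variate polynomials over $\mathbb{F}$ of individual degree at most $d$ in each of $X_1,\dots,X_m$ and at most $d'$ in each of $Y_1,\dots,Y_k$. *)

theory Defs
  imports Main
begin

definition vecs :: "nat \<Rightarrow> 'a list set" where
  "vecs n = {v. length v = n}"

definition exps :: "nat \<Rightarrow> nat \<Rightarrow> nat \<Rightarrow> nat \<Rightarrow> nat list set" where
  "exps m k d d' = {e. length e = m + k \<and> (\<forall>i<m. e ! i \<le> d) \<and>
                        (\<forall>i. m \<le> i \<and> i < m + k \<longrightarrow> e ! i \<le> d')}"

definition mpoly_eval :: "nat \<Rightarrow> nat \<Rightarrow> nat \<Rightarrow> nat \<Rightarrow> (nat list \<Rightarrow> 'a::comm_ring_1) \<Rightarrow> 'a list \<Rightarrow> 'a" where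
  "mpoly_eval m k d d' c v = (\<Sum>e\<in>exps m k d d'. c e * (\<Prod>i<m + k. (v ! i) ^ (e ! i)))"

text \<open>F^{<=d,<=d'}[X_1..X_m,Y_1..Y_k], represented by the evaluation maps of its elements
  (a polynomial is given by an arbitrary coefficient for each admissible monomial).\<close>
definition ideg_polys :: "nat \<Rightarrow> nat \<Rightarrow> nat \<Rightarrow> nat \<Rightarrow> ('a::comm_ring_1 list \<Rightarrow> 'a) set" where
  "ideg_polys m k d d' = {mpoly_eval m k d d' c | c. True}"

end

theory Submission
  imports Defs "HOL-Computational_Algebra.Polynomial" "HOL-Library.FuncSet"
begin

text \<open>If |S| < |G|^k, we exhibit a polynomial Z on which the two sides of (i) differ.
  By (ii) some monomial X^e in the X-variables has a nonzero moment \<Sum>\<alpha> c \<alpha> \<alpha>^e.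
  Products \<delta>_g of univariate Lagrange basis polynomials satisfy \<delta>_g(y) = [g = y] on G^k;
  since S has fewer points than G^k, a nontrivial combination Q = \<Sum>g a_g \<delta>_g vanishes on the
  Y-parts of all points of S. Choosing h with a_h \<noteq> 0, the polynomial Z = X^e \<delta>_h(Y) Q(Y) has
  degree at most 2(|G| - 1) \<le> d' in each Y-variable, vanishes on S, and its sum over y \<in> G^k
  is a_h \<alpha>^e. Hence the left-hand side of (i) at Z is a_h times a nonzero moment, while the
  right-hand side is 0.\<close>

lemma prod_sum_eq_sum_bounded_lists:
  fixes f :: "nat \<Rightarrow> nat \<Rightarrow> 'a::comm_semiring_1"
  shows "(\<Prod>i<n. \<Sum>j\<le>b i. f i j)
    = (\<Sum>e\<in>{e. length e = n \<and> (\<forall>i<n. e!i \<le> b i)}. \<Prod>i<n. f i (e!i))"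
proof -
  have "(\<Prod>i<n. \<Sum>j\<le>b i. f i j) = (\<Sum>g\<in>(\<Pi>\<^sub>E i\<in>{..<n}. {..b i}). \<Prod>i<n. f i (g i))"
    by (rule prod_sum_PiE) auto
  also have "\<dots> = (\<Sum>e\<in>{e. length e = n \<and> (\<forall>i<n. e!i \<le> b i)}. \<Prod>i<n. f i (e!i))"
    by (rule sum.reindex_bij_witness[of _ "\<lambda>e. restrict ((!) e) {..<n}" "\<lambda>g. map g [0..<n]"])
      (auto simp: PiE_def extensional_def intro!: nth_equalityI)
  finally show ?thesis .
qed

lemma prod_lessThan_add:
  fixes m k :: nat
  shows "(\<Prod>i<m + k. f i) = (\<Prod>i<m. f i) * (\<Prod>i<k. f (m + i) :: 'a::comm_monoid_mult)"
  by (induction k) (simp_all add: mult_ac)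

lemma card_UNIV_field_gt_1: "1 < card (UNIV :: 'a::{finite,field} set)"
proof -
  have "card {0, 1::'a} \<le> card (UNIV :: 'a set)" by (rule card_mono) auto
  then show ?thesis by simp
qed

lemma finite_field_homogeneous_system_nontrivial:
  fixes A :: "'i \<Rightarrow> 'j \<Rightarrow> 'a::{finite,field}"
  assumes "finite I" "finite J" "card I < card J"
  shows "\<exists>x. (\<exists>j\<in>J. x j \<noteq> 0) \<and> (\<forall>i\<in>I. (\<Sum>j\<in>J. A i j * x j) = 0)"
proof -
  define L where "L x = restrict (\<lambda>i. \<Sum>j\<in>J. A i j * x j) I" for x :: "'j \<Rightarrow> 'a"
  have "card (L ` (J \<rightarrow>\<^sub>E UNIV)) \<le> card (I \<rightarrow>\<^sub>E (UNIV :: 'a set))"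
    using assms(1) by (intro card_mono finite_PiE) (auto simp: L_def)
  also have "\<dots> = card (UNIV :: 'a set) ^ card I" using assms(1) by (rule card_funcsetE)
  also have "\<dots> < card (UNIV :: 'a set) ^ card J"
    using assms(3) card_UNIV_field_gt_1 by (rule power_strict_increasing)
  also have "\<dots> = card (J \<rightarrow>\<^sub>E (UNIV :: 'a set))" using assms(2) by (rule card_funcsetE[symmetric])
  finally have "\<not> inj_on L (J \<rightarrow>\<^sub>E UNIV)" by (rule pigeonhole)
  then obtain x y where xy: "x \<in> J \<rightarrow>\<^sub>E UNIV" "y \<in> J \<rightarrow>\<^sub>E UNIV" "x \<noteq> y" "L x = L y"
    unfolding inj_on_def by blast
  obtain j where "j \<in> J" "x j \<noteq> y j" using xy(1-3) PiE_ext by blast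
  then have "\<exists>j\<in>J. x j - y j \<noteq> 0" by auto
  moreover have "(\<Sum>j\<in>J. A i j * (x j - y j)) = 0" if "i \<in> I" for i
  proof -
    have "(\<Sum>j\<in>J. A i j * x j) = (\<Sum>j\<in>J. A i j * y j)"
      using fun_cong[OF xy(4), of i] that by (simp add: L_def)
    then show ?thesis by (simp add: right_diff_distrib sum_subtractf)
  qed
  ultimately show ?thesis by (intro exI[of _ "\<lambda>j. x j - y j"]) auto
qed

lemma finite_vecs: "finite (vecs n :: 'a::finite list set)"
  using finite_lists_length_eq[of "UNIV :: 'a set" n] by (simp add: vecs_def)

lemma card_vecs_in_set: "finite G \<Longrightarrow> card {y \<in> vecs k. set y \<subseteq> G} = card G ^ k"
  using card_lists_length_eq[of G k] by (simp add: vecs_def conj_commute)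

lemma exps_eq_bounded_lists:
  "exps m k d d' = {e. length e = m + k \<and> (\<forall>i<m + k. e ! i \<le> (if i < m then d else d'))}"
  by (force simp: exps_def)

lemma poly_eq_sum_upto:
  fixes p :: "'a::comm_semiring_1 poly"
  assumes "degree p \<le> n"
  shows "poly p x = (\<Sum>j\<le>n. coeff p j * x ^ j)"
proof -
  have "poly (\<Sum>j\<le>n. monom (coeff p j) j) x = (\<Sum>j\<le>n. coeff p j * x ^ j)"
    by (simp add: poly_sum poly_monom)
  then show ?thesis by (simp add: poly_as_sum_of_monoms'[OF assms])
qed

lemma poly_prod_in_ideg_polys:
  assumes "\<And>i. i < m + k \<Longrightarrow> degree (p i) \<le> (if i < m then d else d')"
  shows "(\<lambda>v. \<Prod>i<m + k. poly (p i) (v ! i)) \<in> ideg_polys m k d d'"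
proof -
  have "(\<Prod>i<m + k. poly (p i) (v ! i))
      = mpoly_eval m k d d' (\<lambda>e. \<Prod>i<m + k. coeff (p i) (e ! i)) v" for v
  proof -
    have "(\<Prod>i<m + k. poly (p i) (v ! i))
        = (\<Prod>i<m + k. \<Sum>j\<le>(if i < m then d else d'). coeff (p i) j * (v ! i) ^ j)"
      using assms by (intro prod.cong refl poly_eq_sum_upto) auto
    also have "\<dots> = (\<Sum>e\<in>exps m k d d'. \<Prod>i<m + k. coeff (p i) (e ! i) * (v ! i) ^ (e ! i))"
      unfolding exps_eq_bounded_lists by (rule prod_sum_eq_sum_bounded_lists)
    also have "\<dots> = mpoly_eval m k d d' (\<lambda>e. \<Prod>i<m + k. coeff (p i) (e ! i)) v"
      unfolding mpoly_eval_def by (simp add: prod.distrib)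
    finally show ?thesis .
  qed
  then show ?thesis unfolding ideg_polys_def by (auto intro!: exI ext)
qed

lemma lincomb_in_ideg_polys:
  assumes "\<And>g. g \<in> A \<Longrightarrow> F g \<in> ideg_polys m k d d'"
  shows "(\<lambda>v. \<Sum>g\<in>A. w g * F g v) \<in> ideg_polys m k d d'"
proof -
  have "\<forall>g\<in>A. \<exists>c. F g = mpoly_eval m k d d' c"
    using assms unfolding ideg_polys_def by blast
  then obtain C where C: "\<And>g. g \<in> A \<Longrightarrow> F g = mpoly_eval m k d d' (C g)"
    by metis
  have "(\<Sum>g\<in>A. w g * F g v) = mpoly_eval m k d d' (\<lambda>e. \<Sum>g\<in>A. w g * C g e) v" for v
  proof -
    have "(\<Sum>g\<in>A. w g * F g v)
        = (\<Sum>g\<in>A. \<Sum>e\<in>exps m k d d'. w g * (C g e * (\<Prod>i<m + k. (v ! i) ^ (e ! i))))"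
      by (simp add: C mpoly_eval_def sum_distrib_left)
    also have "\<dots> = (\<Sum>e\<in>exps m k d d'. \<Sum>g\<in>A. w g * (C g e * (\<Prod>i<m + k. (v ! i) ^ (e ! i))))"
      by (rule sum.swap)
    also have "\<dots> = mpoly_eval m k d d' (\<lambda>e. \<Sum>g\<in>A. w g * C g e) v"
      by (simp add: mpoly_eval_def sum_distrib_right mult.assoc)
    finally show ?thesis .
  qed
  then show ?thesis unfolding ideg_polys_def by (auto intro!: exI ext)
qed

definition lagrange_basis :: "'a::field set \<Rightarrow> 'a \<Rightarrow> 'a poly" where
  "lagrange_basis G h = smult (inverse (\<Prod>h'\<in>G - {h}. h - h')) (\<Prod>h'\<in>G - {h}. [:- h', 1:])"

lemma poly_lagrange_basis:
  assumes "finite G" "x \<in> G"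
  shows "poly (lagrange_basis G h) x = (if x = h then 1 else 0)"
proof -
  have "poly (lagrange_basis G h) x = inverse (\<Prod>h'\<in>G - {h}. h - h') * (\<Prod>h'\<in>G - {h}. x - h')"
    by (simp add: lagrange_basis_def poly_prod)
  moreover have "(\<Prod>h'\<in>G - {h}. h - h') \<noteq> 0" "x \<noteq> h \<Longrightarrow> (\<Prod>h'\<in>G - {h}. x - h') = 0"
    using assms by auto
  ultimately show ?thesis by auto
qed

lemma degree_lagrange_basis:
  assumes "finite G" "h \<in> G"
  shows "degree (lagrange_basis G h) \<le> card G - 1"
proof -
  have "degree (lagrange_basis G h) \<le> degree (\<Prod>h'\<in>G - {h}. [:- h', 1:])"
    unfolding lagrange_basis_def by (rule degree_smult_le)
  also have "\<dots> \<le> (\<Sum>h'\<in>G - {h}. degree [:- h', 1:])"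
    by (rule degree_prod_sum_le[unfolded comp_def]) (use assms in auto)
  also have "\<dots> = card G - 1" using assms by simp
  finally show ?thesis .
qed

text \<open>The point y is passed as a function so that the Y-part \<open>\<lambda>i. v ! (m + i)\<close> of an arbitrary
  list v can be used; \<open>drop m v\<close> would not agree with it on lists shorter than m + k.\<close>
definition grid_delta :: "'a::field set \<Rightarrow> 'a list \<Rightarrow> (nat \<Rightarrow> 'a) \<Rightarrow> 'a" where
  "grid_delta G g y = (\<Prod>i<length g. poly (lagrange_basis G (g ! i)) (y i))"

lemma grid_delta_nth:
  assumes "finite G" "set y \<subseteq> G" "length y = length g"
  shows "grid_delta G g ((!) y) = (if g = y then 1 else 0)"
proof (cases "g = y")
  case True
  then show ?thesis using assms by (simp add: grid_delta_def poly_lagrange_basis subset_iff)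
next
  case False
  then obtain i where "i < length g" "g ! i \<noteq> y ! i" using assms(3) nth_equalityI by metis
  then have "poly (lagrange_basis G (g ! i)) (y ! i) = 0"
    using assms by (simp add: poly_lagrange_basis subset_iff)
  then show ?thesis unfolding grid_delta_def using False \<open>i < length g\<close> by (auto intro!: prod_zero)
qed

lemma exists_nonzero_monomial_moment:
  fixes c :: "'a list \<Rightarrow> 'a::comm_ring_1"
  assumes "(\<Sum>\<alpha>\<in>vecs m. c \<alpha> * (\<Sum>y\<in>Y. mpoly_eval m k d d' p (\<alpha> @ y))) \<noteq> 0"
  shows "\<exists>e\<in>exps m k d d'. (\<Sum>\<alpha>\<in>vecs m. c \<alpha> * (\<Prod>i<m. (\<alpha> ! i) ^ (e ! i))) \<noteq> 0"
proof (rule ccontr)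
  define X where "X e \<alpha> = (\<Prod>i<m. (\<alpha> ! i) ^ (e ! i))" for e :: "nat list" and \<alpha> :: "'a list"
  define Y' where "Y' e y = (\<Prod>i<k. (y ! i) ^ (e ! (m + i)))" for e :: "nat list" and y :: "'a list"
  assume "\<not> ?thesis"
  then have moments_zero: "(\<Sum>\<alpha>\<in>vecs m. c \<alpha> * X e \<alpha>) = 0" if "e \<in> exps m k d d'" for e
    using that unfolding X_def by blast
  have eval: "mpoly_eval m k d d' p (\<alpha> @ y) = (\<Sum>e\<in>exps m k d d'. p e * Y' e y * X e \<alpha>)"
    if "\<alpha> \<in> vecs m" for \<alpha> y
    using that by (simp add: mpoly_eval_def prod_lessThan_add nth_append vecs_def X_def Y'_def mult_ac)
  have "(\<Sum>\<alpha>\<in>vecs m. c \<alpha> * (\<Sum>y\<in>Y. mpoly_eval m k d d' p (\<alpha> @ y)))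
      = (\<Sum>\<alpha>\<in>vecs m. \<Sum>y\<in>Y. \<Sum>e\<in>exps m k d d'. p e * Y' e y * (c \<alpha> * X e \<alpha>))"
    by (simp add: eval sum_distrib_left mult_ac)
  also have "\<dots> = (\<Sum>y\<in>Y. \<Sum>e\<in>exps m k d d'. \<Sum>\<alpha>\<in>vecs m. p e * Y' e y * (c \<alpha> * X e \<alpha>))"
    by (subst sum.swap) (simp add: sum.swap[of _ "vecs m"])
  also have "\<dots> = (\<Sum>y\<in>Y. \<Sum>e\<in>exps m k d d'. p e * Y' e y * (\<Sum>\<alpha>\<in>vecs m. c \<alpha> * X e \<alpha>))"
    by (simp add: sum_distrib_left)
  also have "\<dots> = 0"
    by (simp add: moments_zero)
  finally show False using assms by simp
qed

lemma test_polynomial_in_ideg_polys: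
  fixes G :: "'a::field set"
  assumes "finite G" "d' \<ge> 2 * (card G - 1)" "e \<in> exps m k d d'"
    and "set h \<subseteq> G" "length h = k" "\<And>g. g \<in> J \<Longrightarrow> set g \<subseteq> G \<and> length g = k"
  shows "(\<lambda>v. (\<Prod>i<m. (v ! i) ^ (e ! i)) * grid_delta G h (\<lambda>i. v ! (m + i))
              * (\<Sum>g\<in>J. a g * grid_delta G g (\<lambda>i. v ! (m + i)))) \<in> ideg_polys m k d d'"
proof -
  define P where "P g i = (if i < m then monom 1 (e ! i)
    else lagrange_basis G (g ! (i - m)) * lagrange_basis G (h ! (i - m)))" for g i
  have factor: "(\<Prod>i<m + k. poly (P g i) (v ! i))
      = (\<Prod>i<m. (v ! i) ^ (e ! i)) * grid_delta G h (\<lambda>i. v ! (m + i)) * grid_delta G g (\<lambda>i. v ! (m + i))"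
    if "g \<in> J" for g v
    using assms(5) assms(6)[OF that]
    by (simp add: P_def prod_lessThan_add grid_delta_def poly_monom prod.distrib mult_ac)
  have "(\<lambda>v. \<Prod>i<m + k. poly (P g i) (v ! i)) \<in> ideg_polys m k d d'" if "g \<in> J" for g
  proof (rule poly_prod_in_ideg_polys)
    fix i assume "i < m + k"
    show "degree (P g i) \<le> (if i < m then d else d')"
    proof (cases "i < m")
      case True
      then show ?thesis using assms(3) by (simp add: P_def exps_def degree_monom_eq)
    next
      case False
      then have "g ! (i - m) \<in> G" "h ! (i - m) \<in> G"
        using assms(4,5) assms(6)[OF that] \<open>i < m + k\<close> by (auto simp: subset_iff)
      then have "degree (P g i) \<le> (card G - 1) + (card G - 1)"
        unfolding P_def using False
        by (simp only: if_False) (intro order.trans[OF degree_mult_le] add_mono degree_lagrange_basis assms(1))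
      then show ?thesis using False assms(2) by simp
    qed
  qed
  then have "(\<lambda>v. \<Sum>g\<in>J. a g * (\<Prod>i<m + k. poly (P g i) (v ! i))) \<in> ideg_polys m k d d'"
    by (rule lincomb_in_ideg_polys)
  also have "(\<lambda>v. \<Sum>g\<in>J. a g * (\<Prod>i<m + k. poly (P g i) (v ! i)))
      = (\<lambda>v. (\<Prod>i<m. (v ! i) ^ (e ! i)) * grid_delta G h (\<lambda>i. v ! (m + i))
              * (\<Sum>g\<in>J. a g * grid_delta G g (\<lambda>i. v ! (m + i))))"
    by (simp add: factor sum_distrib_left mult_ac)
  finally show ?thesis .
qed

lemma exists_vanishing_test_polynomial:
  fixes G :: "'a::{finite, field} set"
  assumes "d' \<ge> 2 * (card G - 1)" "S \<subseteq> vecs (m + k)" "card S < card G ^ k" "e \<in> exps m k d d'"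
  shows "\<exists>Z\<in>ideg_polys m k d d'. (\<forall>q\<in>S. Z q = 0) \<and> (\<exists>b\<noteq>0. \<forall>\<alpha>\<in>vecs m.
           (\<Sum>y\<in>{y \<in> vecs k. set y \<subseteq> G}. Z (\<alpha> @ y)) = b * (\<Prod>i<m. (\<alpha> ! i) ^ (e ! i)))"
proof -
  define J where "J = {y \<in> vecs k. set y \<subseteq> G}"
  define \<Delta> where "\<Delta> g v = grid_delta G g (\<lambda>i. v ! (m + i))" for g v :: "'a list"
  have "finite G" by simp
  have "finite J" "finite S"
    using assms(2) by (auto simp: J_def intro: finite_subset[OF _ finite_vecs])
  moreover have "card S < card J" using assms(3) \<open>finite G\<close> by (simp add: J_def card_vecs_in_set)
  ultimately obtain a where "\<exists>g\<in>J. a g \<noteq> 0" and a_vanish: "\<forall>q\<in>S. (\<Sum>g\<in>J. \<Delta> g q * a g) = 0"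
    using finite_field_homogeneous_system_nontrivial[of S J "\<lambda>q g. \<Delta> g q"] by blast
  then obtain h where h: "h \<in> J" "a h \<noteq> 0" by blast
  \<comment> \<open>The factor \<open>\<Delta> h\<close> makes the sum over G^k pick out the single coefficient \<open>a h\<close>.\<close>
  define Z where "Z v = (\<Prod>i<m. (v ! i) ^ (e ! i)) * \<Delta> h v * (\<Sum>g\<in>J. a g * \<Delta> g v)" for v
  have "Z \<in> ideg_polys m k d d'"
    unfolding Z_def[abs_def] \<Delta>_def using \<open>finite G\<close> assms(1,4) h(1)
    by (intro test_polynomial_in_ideg_polys) (auto simp: J_def vecs_def)
  moreover have "Z q = 0" if "q \<in> S" for q
    using a_vanish that by (simp add: Z_def mult.commute)
  moreover have "(\<Sum>y\<in>J. Z (\<alpha> @ y)) = a h * (\<Prod>i<m. (\<alpha> ! i) ^ (e ! i))" if "\<alpha> \<in> vecs m" for \<alpha>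
  proof -
    have len: "length \<alpha> = m" using that by (simp add: vecs_def)
    have delta: "\<Delta> g (\<alpha> @ y) = (if g = y then 1 else 0)" if "g \<in> J" "y \<in> J" for g y
    proof -
      have "(\<lambda>i. (\<alpha> @ y) ! (m + i)) = (!) y" using len by (auto simp: nth_append)
      then show ?thesis using that grid_delta_nth[of G y g] by (simp add: \<Delta>_def J_def vecs_def)
    qed
    have "Z (\<alpha> @ y) = (if y = h then a h * (\<Prod>i<m. (\<alpha> ! i) ^ (e ! i)) else 0)" if "y \<in> J" for y
    proof -
      have "(\<Sum>g\<in>J. a g * \<Delta> g (\<alpha> @ y)) = a y"
        using \<open>finite J\<close> that by (simp add: delta if_distrib[of "(*) _"] cong: if_cong)
      moreover have "(\<Prod>i<m. ((\<alpha> @ y) ! i) ^ (e ! i)) = (\<Prod>i<m. (\<alpha> ! i) ^ (e ! i))"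
        using len by (simp add: nth_append)
      ultimately show ?thesis using that h(1) by (simp add: Z_def delta)
    qed
    then show ?thesis using \<open>finite J\<close> h(1) by simp
  qed
  ultimately show ?thesis using h(2) unfolding J_def by blast
qed

theorem corollary8p2:
  fixes G :: "'a::{finite, field} set"
    and m k d d' :: nat
    and S :: "'a list set"
    and c dq :: "'a list \<Rightarrow> 'a"
  assumes "d' \<ge> 2 * (card G - 1)"
    and "S \<subseteq> vecs (m + k)"
    and "\<forall>Z \<in> ideg_polys m k d d'.
           (\<Sum>\<alpha>\<in>vecs m. c \<alpha> * (\<Sum>y\<in>{y \<in> vecs k. set y \<subseteq> G}. Z (\<alpha> @ y)))
           = (\<Sum>q\<in>S. dq q * Z q)"
    and "\<exists>Z' \<in> ideg_polys m k d d'.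
           (\<Sum>\<alpha>\<in>vecs m. c \<alpha> * (\<Sum>y\<in>{y \<in> vecs k. set y \<subseteq> G}. Z' (\<alpha> @ y))) \<noteq> 0"
  shows "card S \<ge> card G ^ k"
proof (rule ccontr)
  assume "\<not> card S \<ge> card G ^ k"
  obtain e where e: "e \<in> exps m k d d'"
    and moment: "(\<Sum>\<alpha>\<in>vecs m. c \<alpha> * (\<Prod>i<m. (\<alpha> ! i) ^ (e ! i))) \<noteq> 0"
    using assms(4) exists_nonzero_monomial_moment unfolding ideg_polys_def by blast
  obtain Z b where Z: "Z \<in> ideg_polys m k d d'" "\<forall>q\<in>S. Z q = 0" "b \<noteq> 0"
    and Z_sums: "\<forall>\<alpha>\<in>vecs m.
      (\<Sum>y\<in>{y \<in> vecs k. set y \<subseteq> G}. Z (\<alpha> @ y)) = b * (\<Prod>i<m. (\<alpha> ! i) ^ (e ! i))"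
    using exists_vanishing_test_polynomial[OF assms(1,2) _ e] \<open>\<not> card S \<ge> card G ^ k\<close> by force
  have "(\<Sum>\<alpha>\<in>vecs m. c \<alpha> * (\<Sum>y\<in>{y \<in> vecs k. set y \<subseteq> G}. Z (\<alpha> @ y)))
      = b * (\<Sum>\<alpha>\<in>vecs m. c \<alpha> * (\<Prod>i<m. (\<alpha> ! i) ^ (e ! i)))"
    using Z_sums by (simp add: sum_distrib_left mult_ac)
  also have "\<dots> \<noteq> 0" using Z(3) moment by simp
  finally show False using assms(3) Z(1,2) by simp
qed

end
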